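(* Let $x_j=\ell_j/p_j$. Then $\sum_{n=1}^{2P}n\,\chi_{2P}^{(\ell_1,\ell_2,\ell_3)}(n)\ne0$ if and only if \[ 1<x_1+x_2+x_3<3,\quad -1<x_1+x_2-x_3<1,\quad -1<x_1-x_2+x_3<1,\quad -1<-x_1+x_2+x_3<1, \] and in that case $\sum_{n=1}^{2P}n\,\chi_{2P}^{(\ell_1,\ell_2,\ell_3)}(n)=4P$.
   Context: $p_1,p_2,p_3$ pairwise coprime positive integers, $P=p_1p_2p_3$, integers $1\le\ell_j\le p_j-1$. The odd function $\chi_{2P}^{(\ell_1,\ell_2,\ell_3)}:\mathbb Z\to\{0,\pm1\}$, periodic mod $2P$, is defined by: $\chi(n)=1$ if $n\equiv P(1+\sum_j\varepsilon_j\ell_j/p_j)\pmod{2P}$ for some signs $\varepsilon_j\in\{\pm1\}$ with $\varepsilon_1\varepsilon_2\varepsilon_3=-1$; $\chi(n)=-1$ if this holds with $\varepsilon_1\varepsilon_2\varepsilon_3=1$; $\chi(n)=0$ otherwise. *)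

theory Defs
  imports Complex_Main
begin

text \<open>The residue P(1 + e1 l1/p1 + e2 l2/p2 + e3 l3/p3), written as an integer,
  where P = p1 p2 p3.\<close>
definition chi_point :: "int \<Rightarrow> int \<Rightarrow> int \<Rightarrow> int \<Rightarrow> int \<Rightarrow> int \<Rightarrow> int \<Rightarrow> int \<Rightarrow> int \<Rightarrow> int" where
  "chi_point p1 p2 p3 l1 l2 l3 e1 e2 e3 =
     p1*p2*p3 + e1*l1*p2*p3 + e2*l2*p1*p3 + e3*l3*p1*p2"

definition chi_hit :: "int \<Rightarrow> int \<Rightarrow> int \<Rightarrow> int \<Rightarrow> int \<Rightarrow> int \<Rightarrow> int \<Rightarrow> int \<Rightarrow> bool" where
  "chi_hit p1 p2 p3 l1 l2 l3 s n \<longleftrightarrow>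
     (\<exists>e1\<in>{-1,1}. \<exists>e2\<in>{-1,1}. \<exists>e3\<in>{-1,1}. e1*e2*e3 = s \<and>
        n mod (2*p1*p2*p3) = chi_point p1 p2 p3 l1 l2 l3 e1 e2 e3 mod (2*p1*p2*p3))"

definition chi :: "int \<Rightarrow> int \<Rightarrow> int \<Rightarrow> int \<Rightarrow> int \<Rightarrow> int \<Rightarrow> int \<Rightarrow> int" where
  "chi p1 p2 p3 l1 l2 l3 n =
     (if chi_hit p1 p2 p3 l1 l2 l3 (-1) n then 1
      else if chi_hit p1 p2 p3 l1 l2 l3 1 n then -1 else 0)"

end

(* Write A = l1 p2 p3, B = l2 p1 p3, C = l3 p1 p2. Then chi is the signed indicator of the eight
   residues P + e1 A + e2 B + e3 C mod 2P, e in {-1,1}^3, with sign -e1 e2 e3. By coprimality no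
   offset e1 A + e2 B + e3 C is divisible by P, and the residues are pairwise distinct, so the sum
   of n chi(n) over a period is -sum_e e1 e2 e3 ((P + e1 A + e2 B + e3 C) mod 2P). The unreduced
   points have signed sum 0, so only the wrap-around remains: the sum is 2P times
   sum_e e1 e2 e3 floor((P + t_e) / 2P), where floor((P + t) / 2P) = [t > P] - [-t > P] is odd in t.
   Pairing e with -e leaves 4P ([A+B+C > P] - [A+B-C > P] - [A-B+C > P] - [-A+B+C > P]), which is
   4P times the indicator of the open tetrahedron cut out by the conditions on x1, x2, x3. *)
theory Submission
  imports Defs
begin

definition sign_triples :: "(int \<times> int \<times> int) set" where
  "sign_triples = {-1, 1} \<times> {-1, 1} \<times> {-1, 1}"

lemma finite_sign_triples [simp]: "finite sign_triples"
  by (simp add: sign_triples_def)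

lemma sum_sign_triples:
  "(\<Sum>e\<in>sign_triples. f e) =
     f (1, 1, 1) + f (1, 1, -1) + f (1, -1, 1) + f (1, -1, -1) +
     f (-1, 1, 1) + f (-1, 1, -1) + f (-1, -1, 1) + f (-1, -1, -1)"
  by (simp add: sign_triples_def algebra_simps)

lemma sum_sign_triples_even:
  fixes f :: "int \<times> int \<times> int \<Rightarrow> 'a::comm_semiring_1"
  assumes "\<And>e1 e2 e3. f (- e1, - e2, - e3) = f (e1, e2, e3)"
  shows "(\<Sum>e\<in>sign_triples. f e) = 2 * (f (1, 1, 1) + f (1, 1, -1) + f (1, -1, 1) + f (1, -1, -1))"
  using assms[of 1 1 1] assms[of 1 1 "-1"] assms[of 1 "-1" 1] assms[of 1 "-1" "-1"]
  unfolding sum_sign_triples by (simp add: mult_2 algebra_simps)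

lemma abs_sign_triple_combination_le:
  fixes A B C :: int
  assumes "(e1, e2, e3) \<in> sign_triples"
  shows "\<bar>e1*A + e2*B + e3*C\<bar> \<le> \<bar>A\<bar> + \<bar>B\<bar> + \<bar>C\<bar>"
proof -
  have "\<bar>e1\<bar> = 1" "\<bar>e2\<bar> = 1" "\<bar>e3\<bar> = 1"
    using assms by (auto simp: sign_triples_def)
  then show ?thesis
    using abs_triangle_ineq[of "e1*A + e2*B" "e3*C"] abs_triangle_ineq[of "e1*A" "e2*B"]
    by (simp add: abs_mult)
qed

lemma sum_times_residue_indicator:
  fixes Q :: int and r w :: "'a \<Rightarrow> int"
  assumes "finite I" "Q > 0" and not_dvd: "\<And>i. i \<in> I \<Longrightarrow> \<not> Q dvd r i"
  shows "(\<Sum>n=1..Q. n * (\<Sum>i\<in>I. if n mod Q = r i mod Q then w i else 0)) =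
         (\<Sum>i\<in>I. w i * (r i mod Q))"
proof -
  have "(\<Sum>n=1..Q. n * (if n mod Q = r i mod Q then w i else 0)) = w i * (r i mod Q)"
    if "i \<in> I" for i
  proof -
    have "r i mod Q \<noteq> 0"
      using not_dvd[OF that] by (simp add: dvd_eq_mod_eq_0)
    then have r: "0 < r i mod Q" "r i mod Q < Q"
      using pos_mod_sign[of Q "r i"] pos_mod_bound[of Q "r i"] \<open>Q > 0\<close> by linarith+
    have "n mod Q = r i mod Q \<longleftrightarrow> n = r i mod Q" if "n \<in> {1..Q}" for n
      using that r by (cases "n = Q") auto
    then have "(\<Sum>n=1..Q. n * (if n mod Q = r i mod Q then w i else 0)) =
               (\<Sum>n=1..Q. if n = r i mod Q then w i * n else 0)"
      by (intro sum.cong) auto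
    also have "\<dots> = w i * (r i mod Q)"
      using r by (simp add: sum.delta')
    finally show ?thesis .
  qed
  then show ?thesis
    by (simp add: sum_distrib_left sum.swap[where A = "{1..Q}"])
qed

lemma shifted_div_double:
  fixes P t :: int
  assumes "P > 0" "\<bar>t\<bar> < 3*P" "\<bar>t\<bar> \<noteq> P"
  shows "(P + t) div (2*P) = of_bool (P < t) - of_bool (P < - t)"
proof -
  consider "t < -P" | "-P < t" "t < P" | "P < t"
    using assms by linarith
  then show ?thesis
  proof cases
    case 1
    have "(P + t + 2*P) div (2*P) = (P + t) div (2*P) + 1"
      using assms by (intro div_add_self2) simp
    moreover have "(P + t + 2*P) div (2*P) = 0"
      using 1 assms by (simp add: zdiv_eq_0_iff)
    ultimately show ?thesis
      using 1 by simp
  next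
    case 2
    then show ?thesis
      using assms by (simp add: zdiv_eq_0_iff)
  next
    case 3
    then show ?thesis
      using assms div_pos_geq[of "2*P" "P + t"] by (simp add: zdiv_eq_0_iff)
  qed
qed

definition in_open_tetrahedron :: "int \<Rightarrow> int \<Rightarrow> int \<Rightarrow> int \<Rightarrow> bool" where
  "in_open_tetrahedron P A B C \<longleftrightarrow> P < A + B + C \<and> A + B - C < P \<and> A - B + C < P \<and> - A + B + C < P"

(* The events P < A + B - C, P < A - B + C, P < - A + B + C exclude each other (pairwise their
   left-hand sides add up to 2A, 2B, 2C < 2P), and each of them implies P < A + B + C. *)
lemma tetrahedron_indicator:
  fixes P A B C :: int
  assumes "0 < A" "A < P" "0 < B" "B < P" "0 < C" "C < P"
  shows "of_bool (P < A + B + C) - of_bool (P < A + B - C) - of_bool (P < A - B + C) - of_bool (P < - A + B + C) =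
         (of_bool (P < A + B + C \<and> A + B - C \<le> P \<and> A - B + C \<le> P \<and> - A + B + C \<le> P) :: int)"
  using assms by auto

lemma sum_sign_triples_signed_div:
  fixes P A B C :: int
  assumes "0 < A" "A < P" "0 < B" "B < P" "0 < C" "C < P"
    and nondeg: "\<And>e1 e2 e3. (e1, e2, e3) \<in> sign_triples \<Longrightarrow> \<bar>e1*A + e2*B + e3*C\<bar> \<noteq> P"
  shows "(\<Sum>(e1, e2, e3)\<in>sign_triples. e1*e2*e3 * ((P + (e1*A + e2*B + e3*C)) div (2*P))) =
         2 * of_bool (in_open_tetrahedron P A B C)"
proof -
  define h where "h t = (of_bool (P < t) - of_bool (P < - t) :: int)" for t
  have h_odd: "h (- t) = - h t" for t
    by (simp add: h_def)
  have wrap: "(P + (e1*A + e2*B + e3*C)) div (2*P) = h (e1*A + e2*B + e3*C)"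
    if e: "(e1, e2, e3) \<in> sign_triples" for e1 e2 e3
    unfolding h_def using abs_sign_triple_combination_le[OF e, of A B C] nondeg[OF e] assms
    by (intro shifted_div_double) auto
  define f where "f = (\<lambda>(e1, e2, e3). e1*e2*e3 * h (e1*A + e2*B + e3*C))"
  have f_even: "f (- e1, - e2, - e3) = f (e1, e2, e3)" for e1 e2 e3
  proof -
    have "(- e1)*A + (- e2)*B + (- e3)*C = - (e1*A + e2*B + e3*C)"
      by simp
    then show ?thesis
      unfolding f_def prod.case by (simp only: h_odd)
  qed
  have "(\<Sum>(e1, e2, e3)\<in>sign_triples. e1*e2*e3 * ((P + (e1*A + e2*B + e3*C)) div (2*P))) =
        (\<Sum>e\<in>sign_triples. f e)"
    unfolding f_def by (intro sum.cong) (auto simp: wrap)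
  also have "\<dots> = 2 * (h (A + B + C) - h (A + B - C) - h (A - B + C) + h (A - B - C))"
    unfolding sum_sign_triples_even[OF f_even] by (simp add: f_def)
  also have "\<dots> = 2 * of_bool (in_open_tetrahedron P A B C)"
  proof -
    have "h (A + B + C) = of_bool (P < A + B + C)" "h (A + B - C) = of_bool (P < A + B - C)"
      "h (A - B + C) = of_bool (P < A - B + C)" "h (A - B - C) = - of_bool (P < - A + B + C)"
      using assms by (simp_all add: h_def)
    moreover have "A + B - C \<noteq> P" "A - B + C \<noteq> P" "- A + B + C \<noteq> P"
      using nondeg[of 1 1 "-1"] nondeg[of 1 "-1" 1] nondeg[of "-1" 1 1] assms
      by (auto simp: sign_triples_def)
    ultimately show ?thesis
      using tetrahedron_indicator[OF assms(1-6)] by (auto simp: in_open_tetrahedron_def)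
  qed
  finally show ?thesis .
qed

lemma sum_sign_triples_signed_mod:
  fixes P A B C :: int
  assumes bounds: "0 < A" "A < P" "0 < B" "B < P" "0 < C" "C < P"
    and nondeg: "\<And>e1 e2 e3. (e1, e2, e3) \<in> sign_triples \<Longrightarrow> \<bar>e1*A + e2*B + e3*C\<bar> \<noteq> P"
  shows "(\<Sum>(e1, e2, e3)\<in>sign_triples. - (e1*e2*e3) * ((P + (e1*A + e2*B + e3*C)) mod (2*P))) =
         4*P * of_bool (in_open_tetrahedron P A B C)"
proof -
  have "(\<Sum>(e1, e2, e3)\<in>sign_triples. e1*e2*e3 * (P + (e1*A + e2*B + e3*C))) = 0"
    unfolding sum_sign_triples by (simp add: algebra_simps)
  then have "(\<Sum>(e1, e2, e3)\<in>sign_triples. - (e1*e2*e3) * ((P + (e1*A + e2*B + e3*C)) mod (2*P))) =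
        2*P * (\<Sum>(e1, e2, e3)\<in>sign_triples. e1*e2*e3 * ((P + (e1*A + e2*B + e3*C)) div (2*P)))"
    by (simp add: minus_div_mult_eq_mod[symmetric] algebra_simps sum_subtractf sum_distrib_left split_def)
  then show ?thesis
    using sum_sign_triples_signed_div[OF bounds nondeg] by simp
qed

lemma in_open_tetrahedron_iff_real:
  fixes P A B C :: int
  assumes "0 < A" "A < P" "0 < B" "B < P" "0 < C" "C < P"
  defines "x1 \<equiv> real_of_int A / real_of_int P"
    and "x2 \<equiv> real_of_int B / real_of_int P"
    and "x3 \<equiv> real_of_int C / real_of_int P"
  shows "(1 < x1 + x2 + x3 \<and> x1 + x2 + x3 < 3 \<and>
          -1 < x1 + x2 - x3 \<and> x1 + x2 - x3 < 1 \<and>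
          -1 < x1 - x2 + x3 \<and> x1 - x2 + x3 < 1 \<and>
          -1 < - x1 + x2 + x3 \<and> - x1 + x2 + x3 < 1) \<longleftrightarrow>
         in_open_tetrahedron P A B C"
proof -
  have "real_of_int P > 0"
    using assms by simp
  then show ?thesis
    unfolding x1_def x2_def x3_def in_open_tetrahedron_def using assms
    by (simp add: field_simps flip: of_int_add of_int_diff of_int_minus)
qed

lemma coprime_dvd_mult_imp_eq_0:
  fixes p q m :: int
  assumes "coprime p q" "p dvd m * q" "\<bar>m\<bar> < p"
  shows "m = 0"
proof (rule ccontr)
  assume "m \<noteq> 0"
  moreover have "p dvd m"
    using assms(1,2) by (simp add: coprime_dvd_mult_left_iff)
  ultimately show False
    using assms(3) dvd_imp_le_int[of m p] by linarith
qed

lemma chi_point_eq: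
  "chi_point p1 p2 p3 l1 l2 l3 e1 e2 e3 =
     p1*p2*p3 + (e1*(l1*p2*p3) + e2*(l2*p1*p3) + e3*(l3*p1*p2))"
  by (simp add: chi_point_def algebra_simps)

locale chi_parameters =
  fixes p1 p2 p3 l1 l2 l3 :: int
  assumes p_pos: "p1 > 0" "p2 > 0" "p3 > 0"
    and p_coprime: "coprime p1 p2" "coprime p1 p3" "coprime p2 p3"
    and l_bounds: "1 \<le> l1" "l1 \<le> p1 - 1" "1 \<le> l2" "l2 \<le> p2 - 1" "1 \<le> l3" "l3 \<le> p3 - 1"
begin

lemma dvd_signed_combination_imp_zero:
  assumes d: "\<bar>d1\<bar> \<le> 1" "\<bar>d2\<bar> \<le> 1" "\<bar>d3\<bar> \<le> 1"
    and dvd: "p1*p2*p3 dvd d1*(l1*p2*p3) + d2*(l2*p1*p3) + d3*(l3*p1*p2)"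
  shows "d1 = 0 \<and> d2 = 0 \<and> d3 = 0"
proof -
  have small: "\<bar>d*l\<bar> < p" if "\<bar>d\<bar> \<le> 1" "1 \<le> l" "l \<le> p - 1" for d l p :: int
  proof -
    have "\<bar>d*l\<bar> = \<bar>d\<bar> * l" "\<bar>d\<bar> * l \<le> l"
      using that by (auto simp: abs_mult intro: mult_left_le_one_le)
    then show ?thesis
      using that by linarith
  qed
  have "p1 dvd (d1*l1)*(p2*p3) + p1*(d2*l2*p3 + d3*l3*p2)"
    and "p2 dvd (d2*l2)*(p1*p3) + p2*(d1*l1*p3 + d3*l3*p1)"
    and "p3 dvd (d3*l3)*(p1*p2) + p3*(d1*l1*p2 + d2*l2*p1)"
    using dvd by (auto simp: algebra_simps intro: dvd_trans)
  then have "p1 dvd (d1*l1)*(p2*p3)" "p2 dvd (d2*l2)*(p1*p3)" "p3 dvd (d3*l3)*(p1*p2)"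
    by (simp_all add: dvd_add_left_iff)
  moreover have "coprime p1 (p2*p3)" "coprime p2 (p1*p3)" "coprime p3 (p1*p2)"
    using p_coprime by (simp_all add: coprime_commute)
  ultimately have "d1*l1 = 0" "d2*l2 = 0" "d3*l3 = 0"
    using coprime_dvd_mult_imp_eq_0 small d l_bounds by metis+
  then show ?thesis
    using l_bounds by simp
qed

lemma not_dvd_chi_offset:
  assumes "(e1, e2, e3) \<in> sign_triples"
  shows "\<not> p1*p2*p3 dvd e1*(l1*p2*p3) + e2*(l2*p1*p3) + e3*(l3*p1*p2)"
  using assms dvd_signed_combination_imp_zero[of e1 e2 e3] by (auto simp: sign_triples_def)

lemma chi_point_mod_inj:
  assumes e: "(e1, e2, e3) \<in> sign_triples" and f: "(f1, f2, f3) \<in> sign_triples"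
    and mod_eq: "chi_point p1 p2 p3 l1 l2 l3 e1 e2 e3 mod (2*p1*p2*p3) =
                 chi_point p1 p2 p3 l1 l2 l3 f1 f2 f3 mod (2*p1*p2*p3)"
  shows "(e1, e2, e3) = (f1, f2, f3)"
proof -
  define d1 d2 d3 where "d1 = (e1 - f1) div 2" and "d2 = (e2 - f2) div 2" and "d3 = (e3 - f3) div 2"
  have d: "e1 - f1 = 2*d1" "e2 - f2 = 2*d2" "e3 - f3 = 2*d3" "\<bar>d1\<bar> \<le> 1" "\<bar>d2\<bar> \<le> 1" "\<bar>d3\<bar> \<le> 1"
    using e f by (auto simp: sign_triples_def d1_def d2_def d3_def)
  have "2*(p1*p2*p3) dvd chi_point p1 p2 p3 l1 l2 l3 e1 e2 e3 - chi_point p1 p2 p3 l1 l2 l3 f1 f2 f3"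
    using mod_eq by (simp add: mod_eq_dvd_iff mult.assoc)
  also have "chi_point p1 p2 p3 l1 l2 l3 e1 e2 e3 - chi_point p1 p2 p3 l1 l2 l3 f1 f2 f3 =
             2 * (d1*(l1*p2*p3) + d2*(l2*p1*p3) + d3*(l3*p1*p2))"
    unfolding chi_point_eq using d by (simp add: algebra_simps)
  finally have "p1*p2*p3 dvd d1*(l1*p2*p3) + d2*(l2*p1*p3) + d3*(l3*p1*p2)"
    by (subst (asm) dvd_times_left_cancel_iff) simp_all
  then have "d1 = 0" "d2 = 0" "d3 = 0"
    using dvd_signed_combination_imp_zero d(4-6) by blast+
  then show ?thesis
    using d(1-3) by simp
qed

lemma chi_eq_sum_sign_triples:
  "chi p1 p2 p3 l1 l2 l3 n =
     (\<Sum>(e1, e2, e3)\<in>sign_triples.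
        if n mod (2*p1*p2*p3) = chi_point p1 p2 p3 l1 l2 l3 e1 e2 e3 mod (2*p1*p2*p3)
        then - (e1*e2*e3) else 0)"
proof -
  define hits where "hits = (\<lambda>(e1, e2, e3).
    n mod (2*p1*p2*p3) = chi_point p1 p2 p3 l1 l2 l3 e1 e2 e3 mod (2*p1*p2*p3))"
  define sign where "sign = (\<lambda>(e1, e2, e3). e1*e2*e3 :: int)"
  have sum_eq: "(\<Sum>(e1, e2, e3)\<in>sign_triples.
        if n mod (2*p1*p2*p3) = chi_point p1 p2 p3 l1 l2 l3 e1 e2 e3 mod (2*p1*p2*p3)
        then - (e1*e2*e3) else 0) = (\<Sum>e\<in>sign_triples. if hits e then - sign e else 0)"
    by (intro sum.cong) (auto simp: hits_def sign_def)
  have hit: "chi_hit p1 p2 p3 l1 l2 l3 s n \<longleftrightarrow> (\<exists>e\<in>sign_triples. hits e \<and> sign e = s)" for s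
    unfolding chi_hit_def hits_def sign_def sign_triples_def by auto
  show ?thesis
  proof (cases "\<exists>e\<in>sign_triples. hits e")
    case True
    then obtain e0 where e0: "e0 \<in> sign_triples" "hits e0"
      by blast
    have unique: "hits e \<longleftrightarrow> e = e0" if "e \<in> sign_triples" for e
      using that e0 chi_point_mod_inj by (auto simp: hits_def)
    have "(\<Sum>e\<in>sign_triples. if hits e then - sign e else 0) = - sign e0"
      using e0(1) by (simp add: unique sum.delta cong: if_cong)
    moreover have "sign e0 = 1 \<or> sign e0 = -1"
      using e0(1) by (auto simp: sign_def sign_triples_def)
    moreover have "chi_hit p1 p2 p3 l1 l2 l3 s n \<longleftrightarrow> sign e0 = s" for s
      unfolding hit using unique e0 by blast
    ultimately show ?thesis
      unfolding sum_eq chi_def by auto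
  next
    case False
    then show ?thesis
      unfolding sum_eq chi_def hit by auto
  qed
qed

lemma offset_bounds:
  "0 < l1*p2*p3" "l1*p2*p3 < p1*p2*p3" "0 < l2*p1*p3" "l2*p1*p3 < p1*p2*p3"
  "0 < l3*p1*p2" "l3*p1*p2 < p1*p2*p3"
  using p_pos l_bounds by (simp_all add: mult_strict_right_mono mult.commute mult.left_commute)

lemma sum_mult_chi:
  "(\<Sum>n=1..2*(p1*p2*p3). n * chi p1 p2 p3 l1 l2 l3 n) =
     4*(p1*p2*p3) * of_bool (in_open_tetrahedron (p1*p2*p3) (l1*p2*p3) (l2*p1*p3) (l3*p1*p2))"
proof -
  define P A B C where "P = p1*p2*p3" and "A = l1*p2*p3" and "B = l2*p1*p3" and "C = l3*p1*p2"
  have bounds: "0 < A" "A < P" "0 < B" "B < P" "0 < C" "C < P"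
    unfolding P_def A_def B_def C_def by (fact offset_bounds)+
  have offset_not_dvd: "\<not> P dvd e1*A + e2*B + e3*C" if "(e1, e2, e3) \<in> sign_triples" for e1 e2 e3
    using not_dvd_chi_offset[OF that] by (simp add: P_def A_def B_def C_def)
  define r where "r = (\<lambda>(e1, e2, e3). P + (e1*A + e2*B + e3*C))"
  define w where "w = (\<lambda>(e1, e2, e3). - (e1*e2*e3) :: int)"
  have r_not_dvd: "\<not> 2*P dvd r e" if "e \<in> sign_triples" for e
  proof -
    obtain e1 e2 e3 where "e = (e1, e2, e3)"
      by (cases e)
    then have "\<not> P dvd r e"
      using offset_not_dvd that by (simp add: r_def dvd_add_right_iff)
    then show ?thesis
      by (metis dvd_triv_right dvd_trans)
  qed
  have nondeg: "\<bar>e1*A + e2*B + e3*C\<bar> \<noteq> P" if "(e1, e2, e3) \<in> sign_triples" for e1 e2 e3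
    using offset_not_dvd[OF that] by (metis abs_dvd_iff dvd_refl)
  have "(\<Sum>n=1..2*P. n * chi p1 p2 p3 l1 l2 l3 n) =
        (\<Sum>n=1..2*P. n * (\<Sum>e\<in>sign_triples. if n mod (2*P) = r e mod (2*P) then w e else 0))"
    unfolding r_def w_def P_def A_def B_def C_def
    by (simp add: chi_eq_sum_sign_triples chi_point_eq split_def mult.assoc cong: if_cong)
  also have "\<dots> = (\<Sum>e\<in>sign_triples. w e * (r e mod (2*P)))"
    using bounds r_not_dvd by (intro sum_times_residue_indicator) auto
  also have "\<dots> = 4*P * of_bool (in_open_tetrahedron P A B C)"
    using sum_sign_triples_signed_mod[OF bounds nondeg] unfolding r_def w_def by (simp add: split_def)
  finally show ?thesis
    unfolding P_def A_def B_def C_def .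
qed

end

theorem mainTheorem3:
  fixes p1 p2 p3 l1 l2 l3 :: int
  assumes "p1 > 0" "p2 > 0" "p3 > 0"
    and "coprime p1 p2" "coprime p1 p3" "coprime p2 p3"
    and "1 \<le> l1" "l1 \<le> p1 - 1" "1 \<le> l2" "l2 \<le> p2 - 1" "1 \<le> l3" "l3 \<le> p3 - 1"
  defines "P \<equiv> p1 * p2 * p3"
    and "x1 \<equiv> real_of_int l1 / real_of_int p1"
    and "x2 \<equiv> real_of_int l2 / real_of_int p2"
    and "x3 \<equiv> real_of_int l3 / real_of_int p3"
  shows "((\<Sum>n=1..2*P. n * chi p1 p2 p3 l1 l2 l3 n) \<noteq> 0 \<longleftrightarrow>
            (1 < x1 + x2 + x3 \<and> x1 + x2 + x3 < 3 \<and>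
             -1 < x1 + x2 - x3 \<and> x1 + x2 - x3 < 1 \<and>
             -1 < x1 - x2 + x3 \<and> x1 - x2 + x3 < 1 \<and>
             -1 < - x1 + x2 + x3 \<and> - x1 + x2 + x3 < 1))
       \<and> ((\<Sum>n=1..2*P. n * chi p1 p2 p3 l1 l2 l3 n) \<noteq> 0 \<longrightarrow>
            (\<Sum>n=1..2*P. n * chi p1 p2 p3 l1 l2 l3 n) = 4 * P)"
proof -
  interpret chi_parameters p1 p2 p3 l1 l2 l3
    using assms(1-12) by unfold_locales
  define A B C where "A = l1*p2*p3" and "B = l2*p1*p3" and "C = l3*p1*p2"
  have bounds: "0 < A" "A < P" "0 < B" "B < P" "0 < C" "C < P"
    unfolding P_def A_def B_def C_def by (fact offset_bounds)+
  have "x1 = real_of_int A / real_of_int P" "x2 = real_of_int B / real_of_int P"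
      "x3 = real_of_int C / real_of_int P"
    unfolding x1_def x2_def x3_def A_def B_def C_def P_def using assms(1-3) by simp_all
  then show ?thesis
    using sum_mult_chi in_open_tetrahedron_iff_real[OF bounds] bounds
    unfolding P_def A_def B_def C_def by auto
qed

end
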